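(* Let $X$ be a locally compact Polish space and $B\subseteq X$ dense. Suppose $\succeq$ and $\succeq'$ are complete, continuous, and locally strict binary relations on $X$. If $\succeq\cap(B\times B)\subseteq\succeq'\cap(B\times B)$, then $\succeq=\succeq'$.
   Context: A binary relation $\succeq\subseteq X\times X$ is complete if for all $x,y$, $x\succeq y$ or $y\succeq x$; continuous if it is closed in $X\times X$; locally strict if for all $x\succeq y$ and every neighborhood $V$ of $(x,y)$ in $X\times X$ there is $(x',y')\in V$ with $x'\succ y'$, where $x'\succ y'$ means $x'\succeq y'$ and not $y'\succeq x'$. *)

theory Defs
  imports "HOL-Analysis.Analysis"
begin

text \<open>Binary relations on a topological space X (here: the universe of a type) as sets of pairs.\<close>

definition complete_rel :: "('a \<times> 'a) set \<Rightarrow> bool" where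
  "complete_rel R \<longleftrightarrow> (\<forall>x y. (x, y) \<in> R \<or> (y, x) \<in> R)"

definition strict_part :: "('a \<times> 'a) set \<Rightarrow> ('a \<times> 'a) set" where
  "strict_part R = {(x, y). (x, y) \<in> R \<and> (y, x) \<notin> R}"

definition continuous_rel :: "('a::topological_space \<times> 'a) set \<Rightarrow> bool" where
  "continuous_rel R \<longleftrightarrow> closed R"

definition locally_strict :: "('a::topological_space \<times> 'a) set \<Rightarrow> bool" where
  "locally_strict R \<longleftrightarrow>
     (\<forall>x y. (x, y) \<in> R \<longrightarrow>
        (\<forall>V. open V \<and> (x, y) \<in> V \<longrightarrow> (\<exists>p\<in>V. p \<in> strict_part R)))"

end

theory Submission
  imports Defs
begin

text \<open>For a complete closed relation the strict part is the complement of the converse, hence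
  open; local strictness says the relation lies in the closure of its strict part. So the
  strict part of \<open>R\<close> is an open set whose trace on the dense set \<open>B \<times> B\<close> lies in the closed
  set \<open>R'\<close>, which gives \<open>R \<subseteq> R'\<close>. Completeness of \<open>R\<close> turns this into \<open>strict_part R' \<subseteq> R\<close>,
  and local strictness of \<open>R'\<close> gives \<open>R' \<subseteq> R\<close>.\<close>

lemma strict_part_complete_rel:
  assumes "complete_rel R"
  shows "strict_part R = prod.swap -` (- R)"
  using assms unfolding strict_part_def complete_rel_def by fastforce

lemma open_strict_part:
  fixes R :: "('a::topological_space \<times> 'a) set"
  assumes "complete_rel R" and "closed R"
  shows "open (strict_part R)"
  unfolding strict_part_complete_rel[OF assms(1)]
  using assms(2) open_vimage continuous_on_swap by blast

lemma mem_closure_iff_open_Int: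
  "p \<in> closure S \<longleftrightarrow> (\<forall>V. open V \<and> p \<in> V \<longrightarrow> V \<inter> S \<noteq> {})"
proof
  show "p \<in> closure S \<Longrightarrow> \<forall>V. open V \<and> p \<in> V \<longrightarrow> V \<inter> S \<noteq> {}"
    using open_Int_closure_eq_empty by blast
  show "\<forall>V. open V \<and> p \<in> V \<longrightarrow> V \<inter> S \<noteq> {} \<Longrightarrow> p \<in> closure S"
    unfolding closure_iff_nhds_not_empty by blast
qed

lemma locally_strict_iff_subset_closure_strict_part:
  fixes R :: "('a::topological_space \<times> 'a) set"
  shows "locally_strict R \<longleftrightarrow> R \<subseteq> closure (strict_part R)"
  unfolding locally_strict_def subset_eq mem_closure_iff_open_Int by auto

lemma strict_part_subset_if_subset:
  assumes "complete_rel R" and "R \<subseteq> R'"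
  shows "strict_part R' \<subseteq> R"
  using assms unfolding complete_rel_def strict_part_def by blast

lemma locally_strict_subset_if_dense:
  fixes R R' :: "('a::topological_space \<times> 'a) set"
  assumes "complete_rel R" and "closed R" and "locally_strict R"
    and "closed R'" and "closure D = UNIV" and "strict_part R \<inter> D \<subseteq> R'"
  shows "R \<subseteq> R'"
proof -
  have "R \<subseteq> closure (strict_part R)"
    using assms(3) locally_strict_iff_subset_closure_strict_part by blast
  also have "\<dots> = closure (strict_part R \<inter> D)"
    using closure_open_Int_superset[OF open_strict_part[OF assms(1,2)]] assms(5) by simp
  also have "\<dots> \<subseteq> R'"
    using assms(4,6) by (simp add: closure_minimal)
  finally show ?thesis .
qed

theorem theorem12:
  fixes B :: "'a::polish_space set"
    and R R' :: "('a \<times> 'a) set"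
  assumes "locally compact (UNIV :: 'a set)"
    and "closure B = UNIV"
    and "complete_rel R" and "continuous_rel R" and "locally_strict R"
    and "complete_rel R'" and "continuous_rel R'" and "locally_strict R'"
    and "R \<inter> (B \<times> B) \<subseteq> R' \<inter> (B \<times> B)"
  shows "R = R'"
proof
  have closed: "closed R" "closed R'"
    using assms(4,7) unfolding continuous_rel_def by auto
  have "closure (B \<times> B) = UNIV"
    using assms(2) by (simp add: closure_Times)
  moreover have "strict_part R \<inter> (B \<times> B) \<subseteq> R'"
    using assms(9) unfolding strict_part_def by auto
  ultimately show R_sub: "R \<subseteq> R'"
    using locally_strict_subset_if_dense assms(3,5) closed by blast
  show "R' \<subseteq> R"
    using locally_strict_subset_if_dense[where D = UNIV] assms(6,8) closed
      strict_part_subset_if_subset[OF assms(3) R_sub] by simp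
qed

end
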